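(* Let $C_i, C_j, C_k$ be three pairwise disjoint closed circular discs in $\mathbb{R}^2$ with non-collinear centers (in non-degenerate position). Then the feasible region $S_{i,j}\cap S_{j,k}\cap S_{i,k}$ is a convex polygon with at least $4$ and at most $6$ vertices; in particular it is never a triangle.
   Context: For two disjoint closed discs $C_a, C_b$ with centers $c_a,c_b$, let $p_a, p_b$ be the points where the segment $\overline{c_ac_b}$ meets the boundary circles of $C_a$ and $C_b$ respectively, and let $l_a, l_b$ be the lines through $p_a$, $p_b$ perpendicular to $\overline{c_ac_b}$. The slab $S_{a,b}$ is the closed region between the parallel lines $l_a$ and $l_b$. For three pairwise disjoint discs $C_i,C_j,C_k$, the feasible region is $S_{i,j}\cap S_{j,k}\cap S_{i,k}$. *)

theory Defs
  imports "HOL-Analysis.Analysis"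
begin

definition slab :: "real^2 \<Rightarrow> real \<Rightarrow> real^2 \<Rightarrow> real \<Rightarrow> (real^2) set" where
  "slab ca ra cb rb =
     (let u = cb - ca;
          pa = ca + (ra / norm u) *\<^sub>R u;
          pb = cb - (rb / norm u) *\<^sub>R u
      in {x. u \<bullet> pa \<le> u \<bullet> x \<and> u \<bullet> x \<le> u \<bullet> pb})"

definition vertices :: "(real^2) set \<Rightarrow> (real^2) set" where
  "vertices S = {v. v extreme_point_of S}"

end

(*
  Write F for the intersection of the three slabs. It is cut out by six half-planes, one for
  each ordered pair (A, B) of discs, namely the side of the line l_A facing B. Two slabs with
  independent directions already bound F, and the radical centre of the three circles lies
  strictly inside all six half-planes, so F is a convex polygon with nonempty interior.

  Every vertex lies on at least two of the six lines and a line contains at most two vertices,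
  so F has at most six vertices.

  If F were a triangle, each of its sides would lie on one of the six lines, the three lines
  coming from different slabs. The inward normals of a triangle are positively dependent, and
  the only linear dependence between the sides of the centre triangle is
  (c_B - c_A) + (c_C - c_B) + (c_A - c_C) = 0; hence the three half-planes are those of a
  cyclically oriented triple (A, B), (B, C), (C, A). For such a triple the weighted sum
  |c_A c_B| gap(A,B) + |c_B c_C| gap(B,C) + |c_C c_A| gap(C,A) is a constant K. Evaluated at
  the vertex opposite the side on l_A, the feasibility of the reverse half-plane (B, A) gives
  K <= d (d - r_A - r_B) with d = |c_A c_B|, and similarly for the other two sides; these
  three inequalities contradict the triangle inequalities for the centres.
*)

theory Submission
  imports Defs
begin

section \<open>Planar geometry\<close>

lemma collinear_if_subset_line:
  fixes S :: "(real^2) set"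
  assumes "n \<noteq> 0" "S \<subseteq> {x. n \<bullet> x = c}"
  shows "collinear S"
proof -
  have "aff_dim S \<le> aff_dim {x. n \<bullet> x = c}"
    using assms(2) by (rule aff_dim_subset)
  also have "\<dots> = 1"
    using assms(1) by simp
  finally show ?thesis
    by (simp add: collinear_aff_dim)
qed

lemma orthogonal_noncollinear_eq_0:
  fixes z :: "real^2"
  assumes "\<not> collinear {a, b, c}" "z \<bullet> a = z \<bullet> b" "z \<bullet> a = z \<bullet> c"
  shows "z = 0"
  using collinear_if_subset_line[of z "{a, b, c}" "z \<bullet> a"] assms by auto

lemma collinear_3_sub:
  fixes a b c :: "'a::euclidean_space"
  shows "collinear {a, b, c} \<longleftrightarrow> collinear {0, b - a, c - a}"
proof -
  have "collinear {b, a, c} \<longleftrightarrow> collinear {0, b - a, c - a}"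
    using collinear_3[of b a c] by (simp add: NO_MATCH_def)
  then show ?thesis
    by (simp add: insert_commute)
qed

lemma collinear_sgn_imp_collinear:
  fixes u v :: "'a::euclidean_space"
  assumes "collinear {0, sgn u, sgn v}"
  shows "collinear {0, u, v}"
proof -
  consider "sgn u = 0" | "sgn v = 0" | k where "sgn v = k *\<^sub>R sgn u"
    using assms by (auto simp: collinear_lemma)
  then show ?thesis
  proof cases
    case 3
    show ?thesis
    proof (cases "u = 0")
      case False
      have "v = norm v *\<^sub>R sgn v"
        by (cases "v = 0") (simp_all add: sgn_div_norm)
      also have "\<dots> = (norm v * k / norm u) *\<^sub>R u"
        using 3 False by (simp add: sgn_div_norm divide_inverse_commute)
      finally show ?thesis
        unfolding collinear_lemma by blast
    qed (simp add: collinear_2)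
  qed (auto simp: collinear_lemma sgn_zero_iff)
qed

lemma noncollinear_combination_eq_0:
  fixes a b c :: "'a::euclidean_space"
  assumes "\<not> collinear {a, b, c}" "s *\<^sub>R (b - a) + t *\<^sub>R (c - a) = 0"
  shows "s = 0"
proof (rule ccontr)
  assume "s \<noteq> 0"
  have "s *\<^sub>R (b - a) = - (t *\<^sub>R (c - a))"
    using assms(2) by (simp add: eq_neg_iff_add_eq_0)
  then have "b - a = (- t / s) *\<^sub>R (c - a)"
    using \<open>s \<noteq> 0\<close>
    by (metis divide_inverse_commute scaleR_minus_left scaleR_scaleR scaleR_left_commute right_inverse
        scaleR_one)
  then have "collinear {0, c - a, b - a}"
    unfolding collinear_lemma by blast
  then have "collinear {0, b - a, c - a}"
    by (simp add: insert_commute)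
  with assms(1) show False
    using collinear_3_sub[of a b c] by blast
qed

lemma dist_lt_add_dist_if_noncollinear:
  fixes a b c :: "'a::euclidean_space"
  assumes "\<not> collinear {a, b, c}"
  shows "dist a c < dist a b + dist b c"
proof -
  have "\<not> between (c, a) b"
    using assms collinear_between_cases[of a b c] by blast
  then have "\<not> between (a, c) b"
    by (simp add: between_commute[of a c])
  then show ?thesis
    using dist_triangle[of a c b] by (auto simp: between dist_commute)
qed

lemma linear_inner_pair:
  fixes u v :: "real^2"
  shows "linear (\<lambda>x. vector [u \<bullet> x, v \<bullet> x] :: real^2)"
  by (rule linearI) (simp_all add: vec_eq_iff forall_2 inner_add_right)

lemma inner_pair_eq_0_iff:
  fixes u v :: "real^2"
  assumes "\<not> collinear {0, u, v}"
  shows "(vector [u \<bullet> x, v \<bullet> x] :: real^2) = 0 \<longleftrightarrow> x = 0"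
proof
  assume "(vector [u \<bullet> x, v \<bullet> x] :: real^2) = 0"
  then have "x \<bullet> 0 = x \<bullet> u" "x \<bullet> 0 = x \<bullet> v"
    by (simp_all add: vec_eq_iff forall_2 inner_commute)
  then show "x = 0"
    by (rule orthogonal_noncollinear_eq_0[OF assms])
next
  assume "x = 0"
  then show "(vector [u \<bullet> x, v \<bullet> x] :: real^2) = 0"
    unfolding \<open>x = 0\<close> by (simp add: vec_eq_iff forall_2)
qed

lemma inner_pair_solvable:
  fixes u v :: "real^2"
  assumes "\<not> collinear {0, u, v}"
  obtains x where "u \<bullet> x = s" "v \<bullet> x = t"
proof -
  have "inj (\<lambda>x. vector [u \<bullet> x, v \<bullet> x] :: real^2)"
    unfolding linear_injective_0[OF linear_inner_pair] using inner_pair_eq_0_iff[OF assms] by blast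
  then have "surj (\<lambda>x. vector [u \<bullet> x, v \<bullet> x] :: real^2)"
    by (rule linear_inj_imp_surj[OF linear_inner_pair])
  then obtain x where x: "(vector [s, t] :: real^2) = vector [u \<bullet> x, v \<bullet> x]"
    by (rule surjE)
  have "u \<bullet> x = s" "v \<bullet> x = t"
    using arg_cong[OF x, of "\<lambda>y. y $ 1"] arg_cong[OF x, of "\<lambda>y. y $ 2"] by simp_all
  then show thesis
    by (rule that)
qed

lemma bounded_two_strips:
  fixes u v :: "real^2"
  assumes "\<not> collinear {0, u, v}"
  shows "bounded {x. \<bar>u \<bullet> x\<bar> \<le> B \<and> \<bar>v \<bullet> x\<bar> \<le> B}"
proof -
  obtain e where e: "e > 0" "\<And>x. e * norm x \<le> norm (vector [u \<bullet> x, v \<bullet> x] :: real^2)"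
  proof -
    have lin: "bounded_linear (\<lambda>x. vector [u \<bullet> x, v \<bullet> x] :: real^2)"
      using linear_inner_pair by (simp add: linear_conv_bounded_linear)
    have "\<exists>e>0. \<forall>x\<in>UNIV. e * norm x \<le> norm (vector [u \<bullet> x, v \<bullet> x] :: real^2)"
      by (rule injective_imp_isometric[OF closed_UNIV subspace_UNIV lin])
        (simp add: inner_pair_eq_0_iff[OF assms])
    then show thesis
      using that by blast
  qed
  have "norm x \<le> 2 * B / e" if "\<bar>u \<bullet> x\<bar> \<le> B" "\<bar>v \<bullet> x\<bar> \<le> B" for x
  proof -
    have "e * norm x \<le> \<bar>u \<bullet> x\<bar> + \<bar>v \<bullet> x\<bar>"
      using e(2)[of x] norm_le_l1_cart[of "vector [u \<bullet> x, v \<bullet> x] :: real^2"]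
      by (simp add: sum_2)
    with that e(1) show ?thesis
      by (simp add: pos_le_divide_eq mult.commute)
  qed
  then show ?thesis
    unfolding bounded_iff by blast
qed

lemma radical_center_exists:
  fixes a b c :: "real^2"
  assumes "\<not> collinear {a, b, c}"
  obtains P where "norm (P - a)^2 - ra^2 = norm (P - b)^2 - rb^2"
    "norm (P - a)^2 - ra^2 = norm (P - c)^2 - rc^2"
proof -
  have sq: "norm (P - q)^2 = norm P^2 - 2 * (q \<bullet> P) + norm q^2" for P q :: "real^2"
    using dot_norm_neg[of q P] by (simp add: norm_minus_commute[of q P])
  have "\<not> collinear {0, b - a, c - a}"
    using assms collinear_3_sub[of a b c] by blast
  then obtain P where "(b - a) \<bullet> P = (norm b^2 - rb^2 - norm a^2 + ra^2) / 2"
      "(c - a) \<bullet> P = (norm c^2 - rc^2 - norm a^2 + ra^2) / 2"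
    by (rule inner_pair_solvable)
  then show thesis
    using sq[of P a] sq[of P b] sq[of P c] by (intro that[of P]) (simp_all add: inner_diff_left)
qed

section \<open>Polygons cut out by finitely many half-planes\<close>

lemma open_halfspaces_gt:
  fixes n :: "'k \<Rightarrow> 'a::euclidean_space"
  assumes "finite K"
  shows "open {x. \<forall>k\<in>K. t k < n k \<bullet> x}"
proof -
  have "{x. \<forall>k\<in>K. t k < n k \<bullet> x} = (\<Inter>k\<in>K. {x. n k \<bullet> x > t k})"
    by auto
  then show ?thesis
    using assms by (simp add: open_INT open_halfspace_gt)
qed

lemma polyhedron_halfspaces_ge:
  fixes n :: "'k \<Rightarrow> 'a::euclidean_space"
  assumes "finite K"
  shows "polyhedron {x. \<forall>k\<in>K. t k \<le> n k \<bullet> x}"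
proof -
  have "{x. \<forall>k\<in>K. t k \<le> n k \<bullet> x} = (\<Inter>k\<in>K. {x. n k \<bullet> x \<ge> t k})"
    by auto
  then show ?thesis
    using assms by (auto intro: polyhedron_halfspace_ge)
qed

lemma extreme_point_halfplanes_two_active:
  fixes n :: "'k \<Rightarrow> real^2"
  assumes "finite K" and v: "v extreme_point_of {x. \<forall>k\<in>K. t k \<le> n k \<bullet> x}"
  shows "\<exists>k\<in>K. \<exists>l\<in>K. k \<noteq> l \<and> n k \<bullet> v = t k \<and> n l \<bullet> v = t l"
proof (rule ccontr)
  let ?S = "{x. \<forall>k\<in>K. t k \<le> n k \<bullet> x}"
  assume "\<not> ?thesis"
  then obtain k0 where k0: "\<And>k. k \<in> K \<Longrightarrow> n k \<bullet> v = t k \<Longrightarrow> k = k0"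
    by blast
  \<comment> \<open>then v can be moved a little both ways along the line of the only active constraint\<close>
  obtain w :: "real^2" where w: "w \<noteq> 0" "n k0 \<bullet> w = 0"
    using orthogonal_to_vector_exists[of "n k0"] by (auto simp: orthogonal_def)
  let ?U = "{x. \<forall>k\<in>{k\<in>K. n k \<bullet> v \<noteq> t k}. t k < n k \<bullet> x}"
  have "v \<in> ?S"
    using v by (simp add: extreme_point_of_def)
  then have "v \<in> ?U"
    by force
  moreover have "open ?U"
    using assms(1) by (intro open_halfspaces_gt) simp
  ultimately obtain e where e: "e > 0" "ball v e \<subseteq> ?U"
    by (meson openE)
  define d where "d = (e / (2 * norm w)) *\<^sub>R w"
  have d: "d \<noteq> 0" "norm d < e" "n k0 \<bullet> d = 0"
    using e(1) w by (simp_all add: d_def)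
  have shift: "v + s *\<^sub>R d \<in> ?S" if "\<bar>s\<bar> = 1" for s
  proof -
    have "v + s *\<^sub>R d \<in> ball v e"
      using that d(2) by (simp add: dist_norm)
    then have "v + s *\<^sub>R d \<in> ?U"
      using e(2) by blast
    moreover have "n k0 \<bullet> (v + s *\<^sub>R d) = n k0 \<bullet> v"
      using d(3) by (simp add: inner_add_right)
    ultimately show ?thesis
      using \<open>v \<in> ?S\<close> k0 by force
  qed
  have "v + d \<noteq> v - d"
    using d(1) by (auto simp: vec_eq_iff)
  then have "midpoint (v + d) (v - d) \<in> open_segment (v + d) (v - d)"
    by simp
  moreover have "midpoint (v + d) (v - d) = v"
    by (simp add: midpoint_def scaleR_add_right)
  ultimately have "v \<in> open_segment (v + d) (v - d)"
    by simp
  moreover have "v + d \<in> ?S" "v - d \<in> ?S"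
    using shift[of 1] shift[of "-1"]
    by simp_all
  ultimately show False
    using v unfolding extreme_point_of_def by blast
qed

lemma card_extreme_points_on_line_le_2:
  fixes S :: "(real^2) set"
  assumes "n \<noteq> 0"
  shows "card {v. v extreme_point_of S \<and> n \<bullet> v = c} \<le> 2"
proof (rule ccontr)
  let ?V = "{v. v extreme_point_of S \<and> n \<bullet> v = c}"
  assume "\<not> ?thesis"
  then have "3 \<le> card ?V"
    by simp
  then obtain T where T: "T \<subseteq> ?V" "card T = 3"
    by (rule obtain_subset_with_card_n)
  then obtain p q r where pqr: "T = {p, q, r}" "p \<noteq> q" "q \<noteq> r" "p \<noteq> r"
    by (auto simp: card_3_iff)
  have not_between: False if "x \<in> T" "y \<in> T" "z \<in> T" "x \<noteq> y" "x \<noteq> z" "between (y, z) x" for x y z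
  proof -
    have "x \<in> open_segment y z"
      using that by (simp add: between_mem_segment open_segment_def)
    then show False
      using T(1) that unfolding extreme_point_of_def by blast
  qed
  have "collinear T"
    using T(1) assms by (intro collinear_if_subset_line[of n _ c]) auto
  then consider "between (q, r) p" | "between (r, p) q" | "between (p, q) r"
    unfolding pqr collinear_between_cases by blast
  then show False
  proof cases
    case 1
    then show False using not_between[of p q r] pqr by simp
  next
    case 2
    then show False using not_between[of q r p] pqr by simp
  next
    case 3
    then show False using not_between[of r p q] pqr by simp
  qed
qed

lemma card_extreme_points_halfplanes_le:
  fixes n :: "'k \<Rightarrow> real^2"
  assumes K: "finite K" and n: "\<And>k. k \<in> K \<Longrightarrow> n k \<noteq> 0"
  shows "card {v. v extreme_point_of {x. \<forall>k\<in>K. t k \<le> n k \<bullet> x}} \<le> card K"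
proof -
  let ?S = "{x. \<forall>k\<in>K. t k \<le> n k \<bullet> x}"
  let ?V = "{v. v extreme_point_of ?S}"
  let ?active = "\<lambda>v k. n k \<bullet> v = t k"
  have V: "finite ?V"
    using finite_polyhedron_extreme_points[OF polyhedron_halfspaces_ge[OF K]] .
  have two: "2 \<le> card {k \<in> K. ?active v k}" if v: "v \<in> ?V" for v
  proof -
    obtain k l where "k \<in> K" "l \<in> K" "k \<noteq> l" "?active v k" "?active v l"
      using extreme_point_halfplanes_two_active[OF K] v by blast
    then have "card {k, l} \<le> card {k \<in> K. ?active v k}"
      using K by (intro card_mono) auto
    with \<open>k \<noteq> l\<close> show ?thesis
      by simp
  qed
  \<comment> \<open>double counting of the incidences between vertices and boundary lines\<close>
  have "2 * card ?V = (\<Sum>v\<in>?V. 2)"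
    by simp
  also have "\<dots> \<le> (\<Sum>v\<in>?V. card {k \<in> K. ?active v k})"
    using two by (rule sum_mono)
  also have "\<dots> = (\<Sum>k\<in>K. card {v \<in> ?V. ?active v k})"
    using sum.swap_restrict[OF V K, of "\<lambda>_ _. 1::nat" ?active] by simp
  also have "\<dots> \<le> (\<Sum>k\<in>K. 2)"
  proof (rule sum_mono)
    fix k
    assume "k \<in> K"
    have "{v \<in> ?V. ?active v k} = {v. v extreme_point_of ?S \<and> n k \<bullet> v = t k}"
      by auto
    then show "card {v \<in> ?V. ?active v k} \<le> 2"
      using card_extreme_points_on_line_le_2[OF n[OF \<open>k \<in> K\<close>]] by simp
  qed
  finally show ?thesis
    by simp
qed

lemma triangle_side_on_halfplane_boundary:
  fixes n :: "'k \<Rightarrow> real^2"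
  assumes K: "finite K" and n: "\<And>k. k \<in> K \<Longrightarrow> n k \<noteq> 0"
    and hull: "convex hull {a, b, c} = {x. \<forall>k\<in>K. t k \<le> n k \<bullet> x}"
    and abc: "\<not> collinear {a, b, c}"
  shows "\<exists>k\<in>K. n k \<bullet> b = t k \<and> n k \<bullet> c = t k \<and> t k < n k \<bullet> a"
proof -
  let ?T = "convex hull {a, b, c}"
  have in_T: "a \<in> ?T" "b \<in> ?T" "c \<in> ?T"
    by (simp_all add: hull_inc)
  have "\<exists>k\<in>K. n k \<bullet> b = t k \<and> n k \<bullet> c = t k"
  proof (rule ccontr)
    assume none: "\<not> ?thesis"
    let ?m = "midpoint b c"
    have "\<forall>k\<in>K. t k < n k \<bullet> ?m"
    proof
      fix k
      assume "k \<in> K"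
      have "t k \<le> n k \<bullet> b" "t k \<le> n k \<bullet> c" "n k \<bullet> b \<noteq> t k \<or> n k \<bullet> c \<noteq> t k"
        using in_T \<open>k \<in> K\<close> none unfolding hull by auto
      then show "t k < n k \<bullet> ?m"
        by (auto simp: midpoint_def inner_add_right)
    qed
    moreover have "{x. \<forall>k\<in>K. t k < n k \<bullet> x} \<subseteq> interior ?T"
      by (rule interior_maximal) (auto simp: hull open_halfspaces_gt[OF K] intro: less_imp_le)
    ultimately have "?m \<in> interior ?T"
      by blast
    moreover have "?m \<in> convex hull {b, c}"
      by (simp add: segment_convex_hull [symmetric])
    moreover have "convex hull {b, c} face_of ?T"
      using abc by (subst face_of_convex_hull_affine_independent)
        (auto simp: collinear_3_eq_affine_dependent)
    moreover have "convex hull {b, c} \<noteq> ?T"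
    proof
      assume "convex hull {b, c} = ?T"
      then have "{a, b, c} \<subseteq> convex hull {b, c}"
        by (simp add: hull_subset)
      moreover have "collinear (convex hull {b, c})"
        by (simp flip: segment_convex_hull)
      ultimately show False
        using abc collinear_subset by blast
    qed
    ultimately show False
      using face_of_disjoint_interior by blast
  qed
  then obtain k where k: "k \<in> K" "n k \<bullet> b = t k" "n k \<bullet> c = t k"
    by blast
  have "t k \<le> n k \<bullet> a"
    using in_T k(1) unfolding hull by auto
  moreover have "n k \<bullet> a \<noteq> t k"
    using collinear_if_subset_line[OF n[OF k(1)], of "{a, b, c}"] k abc by auto
  ultimately show ?thesis
    using k by auto
qed

lemma triangle_inward_normals_dependent:
  fixes a b c :: "real^2"
  assumes abc: "\<not> collinear {a, b, c}"
    and sides: "n1 \<bullet> b = t1" "n1 \<bullet> c = t1" "n2 \<bullet> c = t2" "n2 \<bullet> a = t2"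
      "n3 \<bullet> a = t3" "n3 \<bullet> b = t3"
    and heights: "n1 \<bullet> a \<noteq> t1" "n2 \<bullet> b \<noteq> t2" "n3 \<bullet> c \<noteq> t3"
  shows "(1 / (n1 \<bullet> a - t1)) *\<^sub>R n1 + (1 / (n2 \<bullet> b - t2)) *\<^sub>R n2 + (1 / (n3 \<bullet> c - t3)) *\<^sub>R n3 = 0"
    (is "?z = 0")
proof (rule orthogonal_noncollinear_eq_0[OF abc])
  let ?h1 = "n1 \<bullet> a - t1" and ?h2 = "n2 \<bullet> b - t2" and ?h3 = "n3 \<bullet> c - t3"
  have "?z \<bullet> (b - a)
      = (1 / ?h1) * (n1 \<bullet> (b - a)) + (1 / ?h2) * (n2 \<bullet> (b - a)) + (1 / ?h3) * (n3 \<bullet> (b - a))"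
    by (simp add: inner_add_left)
  also have "\<dots> = (1 / ?h1) * (- ?h1) + (1 / ?h2) * ?h2"
    using sides by (simp add: inner_diff_right)
  also have "\<dots> = 0"
    using heights by (simp add: field_simps)
  finally show "?z \<bullet> a = ?z \<bullet> b"
    by (simp add: inner_diff_right)
  have "?z \<bullet> (c - a)
      = (1 / ?h1) * (n1 \<bullet> (c - a)) + (1 / ?h2) * (n2 \<bullet> (c - a)) + (1 / ?h3) * (n3 \<bullet> (c - a))"
    by (simp add: inner_add_left)
  also have "\<dots> = (1 / ?h1) * (- ?h1) + (1 / ?h3) * ?h3"
    using sides by (simp add: inner_diff_right)
  also have "\<dots> = 0"
    using heights by (simp add: field_simps)
  finally show "?z \<bullet> a = ?z \<bullet> c"
    by (simp add: inner_diff_right)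
qed

section \<open>An inequality for the centre triangle\<close>

lemma cycle_sum_exceeds_some_side:
  fixes d1 d2 d3 r1 r2 r3 :: real
  assumes tri: "d1 < d2 + d3" "d2 < d3 + d1" "d3 < d1 + d2"
    and sep: "r1 + r2 < d1" "r2 + r3 < d2" "r3 + r1 < d3"
  defines "K \<equiv> (d1^2 + d2^2 + d3^2) / 2 - (r1 * d1 + r2 * d2 + r3 * d3)"
  shows "d1 * (d1 - r1 - r2) < K \<or> d2 * (d2 - r2 - r3) < K \<or> d3 * (d3 - r3 - r1) < K"
proof (rule ccontr)
  assume "\<not> ?thesis"
  then have le: "K \<le> d1 * (d1 - r1 - r2)" "K \<le> d2 * (d2 - r2 - r3)" "K \<le> d3 * (d3 - r3 - r1)"
    by auto
  \<comment> \<open>the tangent lengths of the incircle of the centre triangle, minus the radii\<close>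
  define t1 where "t1 = (d3 + d1 - d2) / 2 - r1"
  define t2 where "t2 = (d1 + d2 - d3) / 2 - r2"
  define t3 where "t3 = (d2 + d3 - d1) / 2 - r3"
  have "d1 * (d1 - r1 - r2) - K = (d1 - d2) * t2 - d3 * t3"
    "d2 * (d2 - r2 - r3) - K = (d2 - d3) * t3 - d1 * t1"
    "d3 * (d3 - r3 - r1) - K = (d3 - d1) * t1 - d2 * t2"
    unfolding K_def t1_def t2_def t3_def by (simp_all add: power2_eq_square field_simps)
  with le have h: "d3 * t3 \<le> (d1 - d2) * t2" "d1 * t1 \<le> (d2 - d3) * t3" "d2 * t2 \<le> (d3 - d1) * t1"
    by linarith+
  have s: "0 < t1 + t2" "0 < t2 + t3" "0 < t3 + t1"
    using sep by (simp_all add: t1_def t2_def t3_def field_simps)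
  have d: "0 < d1" "0 < d2" "0 < d3"
    using tri by linarith+
  have pos: "0 < t" if "e * u \<le> f * t" "0 < f + e" "0 < t + u" "0 < e" for e f t u :: real
  proof (rule ccontr)
    assume "\<not> 0 < t"
    then have "(f + e) * t \<le> 0"
      using that(2) by (simp add: mult_le_0_iff)
    with that(1) have "e * (t + u) \<le> 0"
      by (simp add: algebra_simps)
    with that(3,4) show False
      by (simp add: mult_le_0_iff)
  qed
  have less: "u < t" if "e * u \<le> f * t" "f < e" "0 < t" "0 < e" for e f t u :: real
  proof -
    have "e * u < e * t"
      using that(1) mult_strict_right_mono[OF that(2,3)] by linarith
    with that(4) show ?thesis
      by simp
  qed
  have "0 < t1" "0 < t2" "0 < t3"
    using pos[OF h(3)] pos[OF h(1)] pos[OF h(2)] s tri d by (simp_all add: add.commute)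
  then have "t3 < t2" "t1 < t3" "t2 < t1"
    using less[OF h(1)] less[OF h(2)] less[OF h(3)] tri d by linarith+
  then show False
    by linarith
qed

section \<open>Discs and the half-planes bounding their slabs\<close>

type_synonym disc = "(real^2) \<times> real"

text \<open>A disc is a pair (centre, radius). For discs A and B, \<open>gap (A, B) x\<close> is the signed
  distance of x from the line l_A of the paper, positive on the side of B; so the slab S_A,B is
  where \<open>gap (A, B)\<close> and \<open>gap (B, A)\<close> are both nonnegative (lemma \<open>slab_eq_gap\<close>).\<close>

definition side_vector :: "disc \<times> disc \<Rightarrow> real^2" where
  "side_vector E = fst (snd E) - fst (fst E)"

definition gap_normal :: "disc \<times> disc \<Rightarrow> real^2" where
  "gap_normal E = sgn (side_vector E)"

definition gap_offset :: "disc \<times> disc \<Rightarrow> real" where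
  "gap_offset E = gap_normal E \<bullet> fst (fst E) + snd (fst E)"

definition gap :: "disc \<times> disc \<Rightarrow> real^2 \<Rightarrow> real" where
  "gap E x = gap_normal E \<bullet> x - gap_offset E"

lemma gap_Pair: "gap (A, B) x = sgn (fst B - fst A) \<bullet> (x - fst A) - snd A"
  by (simp add: gap_def gap_offset_def gap_normal_def side_vector_def inner_diff_right)

lemma gap_normal_eq_scaled_side:
  "gap_normal E = (1 / norm (side_vector E)) *\<^sub>R side_vector E"
  by (simp add: gap_normal_def sgn_div_norm divide_inverse_commute)

lemma dist_mult_gap:
  "dist (fst A) (fst B) * gap (A, B) x = (fst B - fst A) \<bullet> (x - fst A) - snd A * dist (fst A) (fst B)"
proof (cases "fst A = fst B")
  case False
  then show ?thesis
    by (simp add: gap_Pair sgn_div_norm dist_norm norm_minus_commute right_diff_distrib)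
qed simp

lemma gap_add_gap_swap:
  assumes "fst A \<noteq> fst B"
  shows "gap (A, B) x + gap (B, A) x = dist (fst A) (fst B) - snd A - snd B"
proof -
  let ?d = "dist (fst A) (fst B)"
  have "(fst B - fst A) \<bullet> (x - fst A) + (fst A - fst B) \<bullet> (x - fst B) = ?d * ?d"
    by (simp add: dist_norm flip: power2_eq_square) (simp add: power2_norm_eq_inner algebra_simps inner_commute)
  then have "?d * (gap (A, B) x + gap (B, A) x) = ?d * (?d - snd A - snd B)"
    using dist_mult_gap[of A B x] dist_mult_gap[of B A x]
    by (simp add: dist_commute algebra_simps)
  with assms show ?thesis
    by simp
qed

lemma slab_eq_gap:
  assumes "a \<noteq> b"
  shows "slab a ra b rb = {x. 0 \<le> gap ((a, ra), (b, rb)) x \<and> 0 \<le> gap ((b, rb), (a, ra)) x}"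
proof -
  define d where "d = dist a b"
  have d: "d > 0" "(b - a) \<bullet> (b - a) = d * d"
    using assms by (simp_all add: d_def dist_norm norm_minus_commute flip: power2_eq_square power2_norm_eq_inner)
  have "0 \<le> gap ((a, ra), (b, rb)) x \<longleftrightarrow> (b - a) \<bullet> a + ra * d \<le> (b - a) \<bullet> x" for x
    using dist_mult_gap[of "(a, ra)" "(b, rb)" x] d(1) zero_le_mult_iff[of d "gap ((a, ra), (b, rb)) x"]
    by (auto simp: d_def inner_diff_right)
  moreover have "0 \<le> gap ((b, rb), (a, ra)) x \<longleftrightarrow> (b - a) \<bullet> x \<le> (b - a) \<bullet> b - rb * d" for x
    using dist_mult_gap[of "(b, rb)" "(a, ra)" x] d(1) zero_le_mult_iff[of d "gap ((b, rb), (a, ra)) x"]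
    by (auto simp: d_def dist_commute inner_diff_right inner_diff_left inner_commute)
  ultimately show ?thesis
    using d by (simp add: slab_def Let_def dist_norm norm_minus_commute inner_add_right inner_diff_right d_def)
qed

lemma gap_pos_if_equal_power:
  assumes sep: "snd A + snd B < dist (fst A) (fst B)" and "0 < snd B"
    and power: "norm (P - fst A)^2 - snd A^2 = norm (P - fst B)^2 - snd B^2"
  shows "0 < gap (A, B) P"
proof -
  let ?d = "dist (fst A) (fst B)"
  have "norm (P - fst B)^2 = norm (P - fst A)^2 - 2 * ((fst B - fst A) \<bullet> (P - fst A)) + ?d^2"
    by (simp add: dist_norm norm_minus_commute power2_norm_eq_inner algebra_simps inner_commute)
  with power have "2 * ((fst B - fst A) \<bullet> (P - fst A)) = ?d^2 + snd A^2 - snd B^2"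
    by linarith
  then have "2 * (?d * gap (A, B) P) = (?d - snd A)^2 - snd B^2"
    unfolding dist_mult_gap power2_diff by (simp add: algebra_simps)
  moreover have "snd B^2 < (?d - snd A)^2"
    using sep assms(2) by (intro power_strict_mono) auto
  ultimately have "0 < ?d * gap (A, B) P"
    by simp
  then show ?thesis
    by (simp add: zero_less_mult_iff)
qed

lemma dist_weighted_gap_cycle_sum:
  "dist (fst A) (fst B) * gap (A, B) x + dist (fst B) (fst C) * gap (B, C) x + dist (fst C) (fst A) * gap (C, A) x =
     (dist (fst A) (fst B)^2 + dist (fst B) (fst C)^2 + dist (fst C) (fst A)^2) / 2
     - (snd A * dist (fst A) (fst B) + snd B * dist (fst B) (fst C) + snd C * dist (fst C) (fst A))"
  unfolding dist_mult_gap
  by (simp add: dist_norm power2_norm_eq_inner inner_diff_left inner_diff_right inner_commute field_simps)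

lemma cycle_sum_le_side:
  assumes "gap (B, C) v = 0" "gap (C, A) v = 0" "0 \<le> gap (B, A) v" "fst A \<noteq> fst B"
  shows "(dist (fst A) (fst B)^2 + dist (fst B) (fst C)^2 + dist (fst C) (fst A)^2) / 2
           - (snd A * dist (fst A) (fst B) + snd B * dist (fst B) (fst C) + snd C * dist (fst C) (fst A))
         \<le> dist (fst A) (fst B) * (dist (fst A) (fst B) - snd A - snd B)"
proof -
  have "gap (A, B) v \<le> dist (fst A) (fst B) - snd A - snd B"
    using gap_add_gap_swap[OF assms(4), of v] assms(3) by linarith
  then show ?thesis
    unfolding dist_weighted_gap_cycle_sum[of A B v C, symmetric] using assms(1,2)
    by (simp add: mult_left_mono)
qed

lemma dist_lt_add_radii_if_disjoint:
  fixes a b :: "real^2"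
  assumes "0 < ra" "0 < rb" "cball a ra \<inter> cball b rb = {}"
  shows "ra + rb < dist a b"
proof (rule ccontr)
  assume "\<not> ?thesis"
  then have le: "dist a b \<le> ra + rb"
    by simp
  define p where "p = a + (ra / (ra + rb)) *\<^sub>R (b - a)"
  have "dist a p = ra / (ra + rb) * dist a b"
    using assms by (simp add: p_def dist_norm norm_minus_commute)
  also have "\<dots> \<le> ra / (ra + rb) * (ra + rb)"
    using le assms by (intro mult_left_mono) auto
  also have "\<dots> = ra"
    using assms by simp
  finally have "p \<in> cball a ra"
    by simp
  have "1 - ra / (ra + rb) = rb / (ra + rb)"
    using assms by (simp add: field_simps)
  moreover have "b - p = (1 - ra / (ra + rb)) *\<^sub>R (b - a)"
    by (simp add: p_def algebra_simps)
  ultimately have "b - p = (rb / (ra + rb)) *\<^sub>R (b - a)"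
    by simp
  then have "dist b p = rb / (ra + rb) * dist a b"
    using assms by (simp add: dist_norm norm_minus_commute)
  also have "\<dots> \<le> rb / (ra + rb) * (ra + rb)"
    using le assms by (intro mult_left_mono) auto
  also have "\<dots> = rb"
    using assms by simp
  finally have "p \<in> cball b rb"
    by simp
  with \<open>p \<in> cball a ra\<close> assms(3) show False
    by blast
qed

definition separated :: "disc set \<Rightarrow> bool" where
  "separated D \<longleftrightarrow> pairwise (\<lambda>A B. snd A + snd B < dist (fst A) (fst B)) D"

lemma Times_minus_Id_3:
  assumes "A \<noteq> B" "B \<noteq> C" "A \<noteq> C"
  shows "{A, B, C} \<times> {A, B, C} - Id = {(A, B), (B, A), (B, C), (C, B), (A, C), (C, A)}"
  using assms by auto

definition feasible :: "disc set \<Rightarrow> (real^2) set" where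
  "feasible D = {x. \<forall>E \<in> D \<times> D - Id. 0 \<le> gap E x}"

lemma feasible_eq_halfplanes:
  "feasible D = {x. \<forall>E \<in> D \<times> D - Id. gap_offset E \<le> gap_normal E \<bullet> x}"
  by (simp add: feasible_def gap_def)

lemma slabs_inter_eq_feasible:
  assumes "a \<noteq> b" "b \<noteq> c" "a \<noteq> c"
  shows "slab a ra b rb \<inter> slab b rb c rc \<inter> slab a ra c rc = feasible {(a, ra), (b, rb), (c, rc)}"
  using assms by (auto simp: slab_eq_gap feasible_def Times_minus_Id_3)

lemma polyhedron_feasible: "finite D \<Longrightarrow> polyhedron (feasible D)"
  unfolding feasible_eq_halfplanes by (intro polyhedron_halfspaces_ge) simp

lemma Pair_in_Times_minus_Id: "(A, B) \<in> D \<times> D - Id \<longleftrightarrow> A \<in> D \<and> B \<in> D \<and> A \<noteq> B"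
  by auto

lemma Times_minus_Id_3_common_head:
  assumes "P \<in> {X, Y, Z} \<times> {X, Y, Z} - Id" "Q \<in> {X, Y, Z} \<times> {X, Y, Z} - Id"
    "R \<in> {X, Y, Z} \<times> {X, Y, Z} - Id"
    "Q \<notin> {P, prod.swap P}" "R \<notin> {P, prod.swap P}" "R \<notin> {Q, prod.swap Q}"
    "snd P = snd Q"
  shows "R \<in> {(fst P, fst Q), (fst Q, fst P)} \<and> {fst P, snd P, fst Q} = {X, Y, Z}"
  using assms by (cases P; cases Q; cases R) auto

lemma Times_minus_Id_3_cyclic:
  assumes "P \<in> {X, Y, Z} \<times> {X, Y, Z} - Id" "Q \<in> {X, Y, Z} \<times> {X, Y, Z} - Id"
    "R \<in> {X, Y, Z} \<times> {X, Y, Z} - Id"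
    "Q \<notin> {P, prod.swap P}" "R \<notin> {P, prod.swap P}" "R \<notin> {Q, prod.swap Q}"
    "snd P \<noteq> snd Q" "snd Q \<noteq> snd R" "snd P \<noteq> snd R"
  shows "\<exists>A B C. {A, B, C} = {X, Y, Z} \<and> {P, Q, R} = {(A, B), (B, C), (C, A)}"
  using assms by (cases P; cases Q; cases R) auto

locale disc_triple =
  fixes X Y Z :: disc
  assumes radius_pos: "0 < snd X" "0 < snd Y" "0 < snd Z"
    and separated: "separated {X, Y, Z}"
    and noncollinear: "\<not> collinear {fst X, fst Y, fst Z}"
begin

lemma radius_pos_mem: "A \<in> {X, Y, Z} \<Longrightarrow> 0 < snd A"
  using radius_pos by auto

lemma separated_mem:
  "A \<in> {X, Y, Z} \<Longrightarrow> B \<in> {X, Y, Z} \<Longrightarrow> A \<noteq> B \<Longrightarrow> snd A + snd B < dist (fst A) (fst B)"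
  using separated by (auto simp: separated_def pairwise_def)

lemma centers_distinct_mem:
  assumes "A \<in> {X, Y, Z}" "B \<in> {X, Y, Z}" "A \<noteq> B"
  shows "fst A \<noteq> fst B"
proof -
  have "0 < dist (fst A) (fst B)"
    using separated_mem[OF assms] radius_pos_mem[OF assms(1)] radius_pos_mem[OF assms(2)] by linarith
  then show ?thesis
    by auto
qed

lemma discs_distinct: "X \<noteq> Y" "Y \<noteq> Z" "X \<noteq> Z"
  using noncollinear by (auto simp: collinear_2 insert_commute)

lemma gap_swap_nonzero:
  assumes "E \<in> {X, Y, Z} \<times> {X, Y, Z} - Id" "gap E x = 0"
  shows "gap (prod.swap E) x \<noteq> 0"
  using assms separated_mem[of "fst E" "snd E"] gap_add_gap_swap[of "fst E" "snd E" x]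
    centers_distinct_mem[of "fst E" "snd E"]
  by (cases E) (auto simp: dist_commute)

lemma gap_normal_nonzero:
  assumes "E \<in> {X, Y, Z} \<times> {X, Y, Z} - Id"
  shows "gap_normal E \<noteq> 0"
proof -
  have "fst (fst E) \<noteq> fst (snd E)"
    using assms centers_distinct_mem[of "fst E" "snd E"] by (cases E) auto
  then show ?thesis
    by (simp add: gap_normal_def side_vector_def sgn_zero_iff)
qed

lemma card_pairs: "card ({X, Y, Z} \<times> {X, Y, Z} - Id) = 6"
  unfolding Times_minus_Id_3[OF discs_distinct] using discs_distinct by simp

lemma gap_le_dist:
  assumes AB: "A \<in> {X, Y, Z}" "B \<in> {X, Y, Z}" "A \<noteq> B" and x: "x \<in> feasible {X, Y, Z}"
  shows "gap (A, B) x \<le> dist (fst A) (fst B)"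
proof -
  have "0 \<le> gap (B, A) x"
    using x AB by (auto simp: feasible_def)
  then show ?thesis
    using gap_add_gap_swap[OF centers_distinct_mem[OF AB], of x]
      radius_pos_mem[OF AB(1)] radius_pos_mem[OF AB(2)] by linarith
qed

lemma bounded_feasible: "bounded (feasible {X, Y, Z})"
proof -
  let ?u = "gap_normal (X, Y)" and ?v = "gap_normal (X, Z)"
  define B where "B = \<bar>gap_offset (X, Y)\<bar> + \<bar>gap_offset (X, Z)\<bar> + dist (fst X) (fst Y) + dist (fst X) (fst Z)"
  have "feasible {X, Y, Z} \<subseteq> {x. \<bar>?u \<bullet> x\<bar> \<le> B \<and> \<bar>?v \<bullet> x\<bar> \<le> B}"
  proof
    fix x
    assume x: "x \<in> feasible {X, Y, Z}"
    have XY: "(X, Y) \<in> {X, Y, Z} \<times> {X, Y, Z} - Id" and XZ: "(X, Z) \<in> {X, Y, Z} \<times> {X, Y, Z} - Id"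
      using discs_distinct by auto
    have "0 \<le> gap (X, Y) x" "0 \<le> gap (X, Z) x"
      using x XY XZ by (auto simp: feasible_def)
    with gap_le_dist[of X Y x] gap_le_dist[of X Z x] x discs_distinct
    show "x \<in> {x. \<bar>?u \<bullet> x\<bar> \<le> B \<and> \<bar>?v \<bullet> x\<bar> \<le> B}"
      by (auto simp: gap_def B_def)
  qed
  moreover have "\<not> collinear {0, ?u, ?v}"
    using noncollinear collinear_sgn_imp_collinear collinear_3_sub[of "fst X" "fst Y" "fst Z"]
    by (auto simp: gap_normal_def side_vector_def)
  ultimately show ?thesis
    using bounded_two_strips bounded_subset by blast
qed

lemma polytope_feasible: "polytope (feasible {X, Y, Z})"
  using bounded_feasible polyhedron_feasible[of "{X, Y, Z}"] by (simp add: polytope_eq_bounded_polyhedron)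

lemma radical_center_strictly_feasible:
  obtains P where "\<forall>E \<in> {X, Y, Z} \<times> {X, Y, Z} - Id. 0 < gap E P"
proof -
  obtain P where P: "norm (P - fst X)^2 - snd X^2 = norm (P - fst Y)^2 - snd Y^2"
    "norm (P - fst X)^2 - snd X^2 = norm (P - fst Z)^2 - snd Z^2"
    using radical_center_exists[OF noncollinear] by blast
  have "0 < gap E P" if "E \<in> {X, Y, Z} \<times> {X, Y, Z} - Id" for E
  proof -
    obtain A B where E: "E = (A, B)"
      by (cases E)
    with that have AB: "A \<in> {X, Y, Z}" "B \<in> {X, Y, Z}" "A \<noteq> B"
      unfolding Pair_in_Times_minus_Id by blast+
    have "norm (P - fst A)^2 - snd A^2 = norm (P - fst B)^2 - snd B^2"
      using AB P by auto
    then show ?thesis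
      using gap_pos_if_equal_power[OF separated_mem[OF AB] radius_pos_mem[OF AB(2)]] E by simp
  qed
  then show thesis
    using that by blast
qed

lemma aff_dim_feasible: "aff_dim (feasible {X, Y, Z}) = 2"
proof -
  let ?K = "{X, Y, Z} \<times> {X, Y, Z} - Id"
  obtain P where P: "\<forall>E\<in>?K. 0 < gap E P"
    by (rule radical_center_strictly_feasible)
  have "{x. \<forall>E\<in>?K. gap_offset E < gap_normal E \<bullet> x} \<subseteq> interior (feasible {X, Y, Z})"
    by (rule interior_maximal) (auto simp: feasible_eq_halfplanes open_halfspaces_gt intro: less_imp_le)
  moreover have "P \<in> {x. \<forall>E\<in>?K. gap_offset E < gap_normal E \<bullet> x}"
    using P by (simp add: gap_def)
  ultimately have "interior (feasible {X, Y, Z}) \<noteq> {}"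
    by blast
  then show ?thesis
    by (simp add: aff_dim_nonempty_interior)
qed

lemma card_vertices_feasible_le: "card (vertices (feasible {X, Y, Z})) \<le> 6"
proof -
  have "card (vertices (feasible {X, Y, Z})) \<le> card ({X, Y, Z} \<times> {X, Y, Z} - Id)"
    unfolding vertices_def feasible_eq_halfplanes
    by (rule card_extreme_points_halfplanes_le) (simp_all add: gap_normal_nonzero)
  then show ?thesis
    by (simp only: card_pairs)
qed

lemma side_vectors_no_common_head:
  assumes P: "P \<in> {X, Y, Z} \<times> {X, Y, Z} - Id" and Q: "Q \<in> {X, Y, Z} \<times> {X, Y, Z} - Id"
    and R: "R \<in> {X, Y, Z} \<times> {X, Y, Z} - Id"
    and slabs: "Q \<notin> {P, prod.swap P}" "R \<notin> {P, prod.swap P}" "R \<notin> {Q, prod.swap Q}"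
    and pos: "0 < \<alpha>" "0 < \<beta>"
    and dep: "\<alpha> *\<^sub>R side_vector P + \<beta> *\<^sub>R side_vector Q + \<gamma> *\<^sub>R side_vector R = 0"
  shows "snd P \<noteq> snd Q"
proof
  assume head: "snd P = snd Q"
  \<comment> \<open>then R joins the two tails, and the centre H = snd P gets the coefficient \<alpha> + \<beta>\<close>
  then have R_cases: "R \<in> {(fst P, fst Q), (fst Q, fst P)}" and D: "{fst P, snd P, fst Q} = {X, Y, Z}"
    using Times_minus_Id_3_common_head[OF P Q R slabs] by blast+
  let ?a = "fst (fst P)" and ?h = "fst (snd P)" and ?b = "fst (fst Q)"
  have "fst ` {fst P, snd P, fst Q} = fst ` {X, Y, Z}"
    by (simp only: D)
  then have nc: "\<not> collinear {?a, ?h, ?b}"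
    using noncollinear by simp
  have "side_vector R = 1 *\<^sub>R (?b - ?a) \<or> side_vector R = (- 1) *\<^sub>R (?b - ?a)"
    using R_cases by (auto simp: side_vector_def)
  then obtain s where s: "side_vector R = s *\<^sub>R (?b - ?a)"
    by blast
  have "(\<alpha> + \<beta>) *\<^sub>R (?h - ?a) + (\<gamma> * s - \<beta>) *\<^sub>R (?b - ?a)
      = \<alpha> *\<^sub>R (?h - ?a) + \<beta> *\<^sub>R (?h - ?b) + \<gamma> *\<^sub>R (s *\<^sub>R (?b - ?a))"
    by (simp add: algebra_simps)
  also have "\<dots> = 0"
    using dep head s by (simp add: side_vector_def)
  finally have "\<alpha> + \<beta> = 0"
    by (rule noncollinear_combination_eq_0[OF nc])
  with pos show False
    by simp
qed

lemma side_vectors_positively_dependent_cyclic: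
  assumes P: "P \<in> {X, Y, Z} \<times> {X, Y, Z} - Id" and Q: "Q \<in> {X, Y, Z} \<times> {X, Y, Z} - Id"
    and R: "R \<in> {X, Y, Z} \<times> {X, Y, Z} - Id"
    and slabs: "Q \<notin> {P, prod.swap P}" "R \<notin> {P, prod.swap P}" "R \<notin> {Q, prod.swap Q}"
    and pos: "0 < \<alpha>" "0 < \<beta>" "0 < \<gamma>"
    and dep: "\<alpha> *\<^sub>R side_vector P + \<beta> *\<^sub>R side_vector Q + \<gamma> *\<^sub>R side_vector R = 0"
  shows "\<exists>A B C. {A, B, C} = {X, Y, Z} \<and> {P, Q, R} = {(A, B), (B, C), (C, A)}"
proof -
  have swap_sym: "E \<notin> {E', prod.swap E'}" if "E' \<notin> {E, prod.swap E}" for E E' :: "disc \<times> disc"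
    using that by (auto simp: prod.swap_def)
  have "snd P \<noteq> snd Q"
    using side_vectors_no_common_head[OF P Q R slabs pos(1,2) dep] .
  moreover have "snd Q \<noteq> snd R"
    using side_vectors_no_common_head[OF Q R P slabs(3) swap_sym[OF slabs(1)] swap_sym[OF slabs(2)] pos(2,3)]
      dep by (simp add: ac_simps)
  moreover have "snd P \<noteq> snd R"
    using side_vectors_no_common_head[OF P R Q slabs(2,1) swap_sym[OF slabs(3)] pos(1,3), where \<gamma> = \<beta>]
      dep by (simp add: ac_simps)
  ultimately show ?thesis
    by (rule Times_minus_Id_3_cyclic[OF P Q R slabs])
qed

lemma cyclic_triangle_infeasible:
  assumes ABC: "{A, B, C} = {X, Y, Z}"
    and vertex: "\<forall>E\<in>{(A, B), (B, C), (C, A)}. \<exists>v\<in>feasible {X, Y, Z}.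
      \<forall>E'\<in>{(A, B), (B, C), (C, A)}. E' \<noteq> E \<longrightarrow> gap E' v = 0"
  shows False
proof -
  have mem: "A \<in> {X, Y, Z}" "B \<in> {X, Y, Z}" "C \<in> {X, Y, Z}"
    using ABC by auto
  have "card {A, B, C} = 3"
    using ABC discs_distinct by simp
  then have distinct: "A \<noteq> B" "B \<noteq> C" "C \<noteq> A"
    by (auto simp: card_insert_if split: if_splits)
  have in_F: "0 \<le> gap (V, U) v"
    if "v \<in> feasible {X, Y, Z}" "U \<in> {X, Y, Z}" "V \<in> {X, Y, Z}" "U \<noteq> V" for U V v
    using that by (auto simp: feasible_def)
  obtain a where a: "a \<in> feasible {X, Y, Z}" "gap (B, C) a = 0" "gap (C, A) a = 0"
    using vertex distinct by auto
  obtain b where b: "b \<in> feasible {X, Y, Z}" "gap (C, A) b = 0" "gap (A, B) b = 0"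
    using vertex distinct by auto
  obtain c where c: "c \<in> feasible {X, Y, Z}" "gap (A, B) c = 0" "gap (B, C) c = 0"
    using vertex distinct by auto
  \<comment> \<open>the constant value of the weighted sum of the three gaps; at the vertex opposite a side only
    the gap of that side survives\<close>
  define K where "K = (dist (fst A) (fst B)^2 + dist (fst B) (fst C)^2 + dist (fst C) (fst A)^2) / 2
    - (snd A * dist (fst A) (fst B) + snd B * dist (fst B) (fst C) + snd C * dist (fst C) (fst A))"
  have le: "K \<le> dist (fst A) (fst B) * (dist (fst A) (fst B) - snd A - snd B)"
    "K \<le> dist (fst B) (fst C) * (dist (fst B) (fst C) - snd B - snd C)"
    "K \<le> dist (fst C) (fst A) * (dist (fst C) (fst A) - snd C - snd A)"
    using cycle_sum_le_side[OF a(2,3) in_F[OF a(1) mem(1,2) distinct(1)] centers_distinct_mem[OF mem(1,2) distinct(1)]]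
      cycle_sum_le_side[OF b(2,3) in_F[OF b(1) mem(2,3) distinct(2)] centers_distinct_mem[OF mem(2,3) distinct(2)]]
      cycle_sum_le_side[OF c(2,3) in_F[OF c(1) mem(3,1) distinct(3)] centers_distinct_mem[OF mem(3,1) distinct(3)]]
    by (simp_all add: K_def ac_simps)
  have "fst ` {A, B, C} = fst ` {X, Y, Z}"
    by (simp only: ABC)
  then have nc: "\<not> collinear {fst A, fst B, fst C}"
    using noncollinear by simp
  have tri: "dist (fst A) (fst B) < dist (fst B) (fst C) + dist (fst C) (fst A)"
    "dist (fst B) (fst C) < dist (fst C) (fst A) + dist (fst A) (fst B)"
    "dist (fst C) (fst A) < dist (fst A) (fst B) + dist (fst B) (fst C)"
    using dist_lt_add_dist_if_noncollinear[of "fst A" "fst C" "fst B"]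
      dist_lt_add_dist_if_noncollinear[of "fst B" "fst A" "fst C"]
      dist_lt_add_dist_if_noncollinear[of "fst C" "fst B" "fst A"] nc
    by (simp_all add: insert_commute dist_commute add.commute)
  show False
    using cycle_sum_exceeds_some_side[OF tri separated_mem[OF mem(1,2) distinct(1)]
        separated_mem[OF mem(2,3) distinct(2)] separated_mem[OF mem(3,1) distinct(3)]]
      le unfolding K_def by linarith
qed

lemma triangle_sides_on_constraints:
  assumes hull: "feasible {X, Y, Z} = convex hull {a, b, c}" and abc: "\<not> collinear {a, b, c}"
  obtains P Q R where
    "P \<in> {X, Y, Z} \<times> {X, Y, Z} - Id" "gap P b = 0" "gap P c = 0" "0 < gap P a"
    "Q \<in> {X, Y, Z} \<times> {X, Y, Z} - Id" "gap Q c = 0" "gap Q a = 0" "0 < gap Q b"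
    "R \<in> {X, Y, Z} \<times> {X, Y, Z} - Id" "gap R a = 0" "gap R b = 0" "0 < gap R c"
proof -
  let ?K = "{X, Y, Z} \<times> {X, Y, Z} - Id"
  have side: "\<exists>E\<in>?K. gap E q = 0 \<and> gap E r = 0 \<and> 0 < gap E p"
    if "convex hull {p, q, r} = convex hull {a, b, c}" "\<not> collinear {p, q, r}" for p q r
    using triangle_side_on_halfplane_boundary[OF _ gap_normal_nonzero, where t = gap_offset] that hull
    by (fastforce simp: feasible_eq_halfplanes gap_def)
  obtain P where "P \<in> ?K" "gap P b = 0" "gap P c = 0" "0 < gap P a"
    using side[of a b c] abc by blast
  moreover obtain Q where "Q \<in> ?K" "gap Q c = 0" "gap Q a = 0" "0 < gap Q b"
    using side[of b c a] abc by (auto simp: insert_commute)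
  moreover obtain R where "R \<in> ?K" "gap R a = 0" "gap R b = 0" "0 < gap R c"
    using side[of c a b] abc by (auto simp: insert_commute)
  ultimately show thesis
    by (rule that)
qed

lemma feasible_neq_triangle:
  assumes abc: "\<not> collinear {a, b, c}"
  shows "feasible {X, Y, Z} \<noteq> convex hull {a, b, c}"
proof
  let ?K = "{X, Y, Z} \<times> {X, Y, Z} - Id"
  assume hull: "feasible {X, Y, Z} = convex hull {a, b, c}"
  obtain P Q R where P: "P \<in> ?K" "gap P b = 0" "gap P c = 0" "0 < gap P a"
    and Q: "Q \<in> ?K" "gap Q c = 0" "gap Q a = 0" "0 < gap Q b"
    and R: "R \<in> ?K" "gap R a = 0" "gap R b = 0" "0 < gap R c"
    by (rule triangle_sides_on_constraints[OF hull abc])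
  have slabs: "Q \<notin> {P, prod.swap P}" "R \<notin> {P, prod.swap P}" "R \<notin> {Q, prod.swap Q}"
    using P(4) Q(3) R(2) gap_swap_nonzero[OF P(1,3)] Q(2)
      gap_swap_nonzero[OF P(1,2)] R(3) Q(4) gap_swap_nonzero[OF Q(1,3)] by auto
  have "(1 / gap P a) *\<^sub>R gap_normal P + (1 / gap Q b) *\<^sub>R gap_normal Q + (1 / gap R c) *\<^sub>R gap_normal R = 0"
    using triangle_inward_normals_dependent[OF abc, of "gap_normal P" "gap_offset P"
        "gap_normal Q" "gap_offset Q" "gap_normal R" "gap_offset R"] P Q R
    by (simp add: gap_def)
  then have dep: "(1 / (gap P a * norm (side_vector P))) *\<^sub>R side_vector P
      + (1 / (gap Q b * norm (side_vector Q))) *\<^sub>R side_vector Q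
      + (1 / (gap R c * norm (side_vector R))) *\<^sub>R side_vector R = 0"
    by (simp add: gap_normal_eq_scaled_side)
  have norm_pos: "0 < norm (side_vector E)" if "E \<in> ?K" for E
    using gap_normal_nonzero[OF that] by (simp add: gap_normal_def sgn_zero_iff)
  have "0 < 1 / (gap P a * norm (side_vector P))" "0 < 1 / (gap Q b * norm (side_vector Q))"
    "0 < 1 / (gap R c * norm (side_vector R))"
    using P(1,4) Q(1,4) R(1,4) norm_pos by simp_all
  then obtain A B C where ABC: "{A, B, C} = {X, Y, Z}" and cycle: "{P, Q, R} = {(A, B), (B, C), (C, A)}"
    using side_vectors_positively_dependent_cyclic[OF P(1) Q(1) R(1) slabs _ _ _ dep] by blast
  have abc_F: "a \<in> feasible {X, Y, Z}" "b \<in> feasible {X, Y, Z}" "c \<in> feasible {X, Y, Z}"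
    unfolding hull by (simp_all add: hull_inc)
  have "\<forall>E\<in>{P, Q, R}. \<exists>v\<in>feasible {X, Y, Z}. \<forall>E'\<in>{P, Q, R}. E' \<noteq> E \<longrightarrow> gap E' v = 0"
    using abc_F P(2,3) Q(2,3) R(2,3) by blast
  then show False
    using cyclic_triangle_infeasible[OF ABC] by (simp only: cycle)
qed

lemma card_vertices_feasible_ge: "4 \<le> card (vertices (feasible {X, Y, Z}))"
proof (rule ccontr)
  let ?F = "feasible {X, Y, Z}"
  let ?V = "vertices ?F"
  assume "\<not> 4 \<le> card ?V"
  have finite: "finite ?V"
    unfolding vertices_def by (rule finite_polyhedron_extreme_points[OF polyhedron_feasible]) simp
  have hull: "?F = convex hull ?V"
    unfolding vertices_def using polytope_feasible
    by (simp add: Krein_Milman_Minkowski polytope_imp_compact polytope_imp_convex)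
  then have dim: "aff_dim ?V = 2"
    using aff_dim_feasible by (metis aff_dim_convex_hull)
  then have "card ?V = 3"
    using aff_dim_le_card[OF finite] \<open>\<not> 4 \<le> card ?V\<close> by linarith
  then obtain a b c where V: "?V = {a, b, c}"
    by (auto simp: card_3_iff)
  then have "\<not> collinear {a, b, c}"
    using dim by (simp add: collinear_aff_dim)
  with hull V show False
    using feasible_neq_triangle by simp
qed

end

theorem theorem2:
  fixes ci cj ck :: "real^2" and ri rj rk :: real
  assumes "ri > 0" "rj > 0" "rk > 0"
    and "cball ci ri \<inter> cball cj rj = {}"
    and "cball cj rj \<inter> cball ck rk = {}"
    and "cball ci ri \<inter> cball ck rk = {}"
    and "\<not> collinear {ci, cj, ck}"
  shows "let F = slab ci ri cj rj \<inter> slab cj rj ck rk \<inter> slab ci ri ck rk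
         in polytope F \<and> aff_dim F = 2 \<and>
            4 \<le> card (vertices F) \<and> card (vertices F) \<le> 6"
proof -
  have "ri + rj < dist ci cj" "rj + rk < dist cj ck" "ri + rk < dist ci ck"
    using assms(1-6) dist_lt_add_radii_if_disjoint by blast+
  then interpret disc_triple "(ci, ri)" "(cj, rj)" "(ck, rk)"
    using assms(1-3,7) by unfold_locales (auto simp: separated_def pairwise_insert dist_commute add.commute)
  have "ci \<noteq> cj" "cj \<noteq> ck" "ci \<noteq> ck"
    using assms(7) by (auto simp: collinear_2 insert_commute)
  then have "slab ci ri cj rj \<inter> slab cj rj ck rk \<inter> slab ci ri ck rk = feasible {(ci, ri), (cj, rj), (ck, rk)}"
    by (rule slabs_inter_eq_feasible)
  then show ?thesis
    using polytope_feasible aff_dim_feasible card_vertices_feasible_le card_vertices_feasible_ge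
    by (simp add: Let_def)
qed

end
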